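(* Fix $z$ in a sufficiently small neighborhood of $\tfrac12$. Then $$\widehat\psi(\zeta,1-z)=-\widehat\varphi(\zeta,z).$$
   Context: For a parameter $t$ near $\frac12$: $Q(w)=w(w-1)(w-t)$, $w_\pm(t)=\frac13(t+1)\pm\frac13(t^2-t+1)^{1/2}$ (principal root), $Q_\pm(t)=Q(w_\pm(t))$. With $u(t)=\frac{3t-(t+1)^2}{3}$, $v(Q,t)=\frac1{27}\big(-2(t+1)^3+9t(t+1)-27Q\big)$, principal branches, $w_k(Q,t)=\frac{t+1}{3}+2\left(-\frac u3\right)^{1/2}\cos\!\Big(\frac13\arccos\Big(\frac{3v}{2u}\big(-\frac3u\big)^{1/2}\Big)+\theta_k\Big)$, $\theta_0=\frac{2\pi}3,\theta_1=0,\theta_2=-\frac{2\pi}3$. $\Psi(Q,t)=Q\frac{2w_1-w_0-w_2}{(w_0-w_1)(w_0-w_2)(w_1-w_2)}$, $\Phi(Q,t)=Q\frac{w_1+w_2-2w_0}{(w_0-w_1)(w_0-w_2)(w_1-w_2)}$ with $w_k=w_k(Q,t)$; $\widehat\psi(\zeta,t)=\Psi(Q_-(t)e^{-\zeta},t)$, $\widehat\varphi(\zeta,t)=\Phi(Q_+(t)e^{-\zeta},t)$. *)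

theory Defs
  imports "HOL-Analysis.Analysis"
begin

definition Qpoly :: "complex \<Rightarrow> complex \<Rightarrow> complex" where
  "Qpoly t w = w * (w - 1) * (w - t)"

definition w_plus :: "complex \<Rightarrow> complex" where
  "w_plus t = (t + 1) / 3 + csqrt (t\<^sup>2 - t + 1) / 3"

definition w_minus :: "complex \<Rightarrow> complex" where
  "w_minus t = (t + 1) / 3 - csqrt (t\<^sup>2 - t + 1) / 3"

definition Q_plus :: "complex \<Rightarrow> complex" where
  "Q_plus t = Qpoly t (w_plus t)"

definition Q_minus :: "complex \<Rightarrow> complex" where
  "Q_minus t = Qpoly t (w_minus t)"

definition u_coef :: "complex \<Rightarrow> complex" where
  "u_coef t = (3 * t - (t + 1)\<^sup>2) / 3"

definition v_coef :: "complex \<Rightarrow> complex \<Rightarrow> complex" where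
  "v_coef Q t = (-2 * (t + 1)^3 + 9 * t * (t + 1) - 27 * Q) / 27"

definition theta :: "nat \<Rightarrow> complex" where
  "theta k = (if k = 0 then 2 * of_real pi / 3 else if k = 1 then 0 else - 2 * of_real pi / 3)"

definition wroot :: "nat \<Rightarrow> complex \<Rightarrow> complex \<Rightarrow> complex" where
  "wroot k Q t = (t + 1) / 3 + 2 * csqrt (- u_coef t / 3) *
     cos (Arccos (3 * v_coef Q t / (2 * u_coef t) * csqrt (- 3 / u_coef t)) / 3 + theta k)"

definition Psi :: "complex \<Rightarrow> complex \<Rightarrow> complex" where
  "Psi Q t = (let w0 = wroot 0 Q t; w1 = wroot 1 Q t; w2 = wroot 2 Q t in
     Q * (2 * w1 - w0 - w2) / ((w0 - w1) * (w0 - w2) * (w1 - w2)))"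

definition Phi :: "complex \<Rightarrow> complex \<Rightarrow> complex" where
  "Phi Q t = (let w0 = wroot 0 Q t; w1 = wroot 1 Q t; w2 = wroot 2 Q t in
     Q * (w1 + w2 - 2 * w0) / ((w0 - w1) * (w0 - w2) * (w1 - w2)))"

definition psi_hat :: "complex \<Rightarrow> complex \<Rightarrow> complex" where
  "psi_hat \<zeta> t = Psi (Q_minus t * exp (- \<zeta>)) t"

definition phi_hat :: "complex \<Rightarrow> complex \<Rightarrow> complex" where
  "phi_hat \<zeta> t = Phi (Q_plus t * exp (- \<zeta>)) t"

end

theory Submission
  imports Defs
begin

text \<open>
  The substitution \<open>t \<mapsto> 1 - t\<close>, \<open>Q \<mapsto> -Q\<close> carries the cubic \<open>w (w - 1) (w - t) = Q\<close> to itself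
  under \<open>w \<mapsto> 1 - w\<close>; it fixes \<open>u\<close>, negates \<open>v\<close> and hence the argument of \<open>Arccos\<close>.
  Since \<open>Arccos (- x) = \<pi> - Arccos x\<close> holds for every complex \<open>x\<close> with principal branches,
  the trigonometric root formula turns into \<open>w\<^sub>0 \<mapsto> 1 - w\<^sub>1\<close>, \<open>w\<^sub>1 \<mapsto> 1 - w\<^sub>0\<close>,
  \<open>w\<^sub>2 \<mapsto> 1 - w\<^sub>2\<close>, which changes \<open>\<Psi>\<close> into \<open>-\<Phi>\<close>. Finally \<open>w\<^sub>-(1 - t) = 1 - w\<^sub>+(t)\<close>
  gives \<open>Q\<^sub>-(1 - t) = - Q\<^sub>+(t)\<close>. The identity therefore holds for all \<open>z\<close>, not only near \<open>1/2\<close>.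
\<close>

lemma Im_Arccos_body_nonneg: "0 \<le> Im (w + \<i> * csqrt (1 - w\<^sup>2))"
proof -
  define s where "s = csqrt (1 - w\<^sup>2)"
  have sq: "s\<^sup>2 = 1 - w\<^sup>2" unfolding s_def by simp
  have Re_s: "0 \<le> Re s" unfolding s_def by (rule Re_csqrt)
  have Re_sq: "Re s ^ 2 - Im s ^ 2 = 1 - Re w ^ 2 + Im w ^ 2"
    using arg_cong[OF sq, of Re] by (simp add: power2_eq_square algebra_simps)
  have Im_sq: "Re s * Im s = - (Re w * Im w)"
    using arg_cong[OF sq, of Im] by (simp add: power2_eq_square algebra_simps)
  have "Re s + Im w \<ge> 0"
  proof (rule ccontr)
    assume "\<not> ?thesis"
    then have lt: "Re s < - Im w" by simp
    then have Im_w: "Im w < 0" using Re_s by simp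
    have less: "Re s ^ 2 < Im w ^ 2" using lt Re_s
      by (smt (verit) power_strict_mono power2_minus zero_less_numeral)
    have "(Re w * Im w)\<^sup>2 = Re s ^ 2 * Im s ^ 2"
      using Im_sq by (metis power_mult_distrib power2_minus)
    also have "\<dots> \<le> Im w ^ 2 * Im s ^ 2" using less by (intro mult_right_mono) auto
    finally have "Re w ^ 2 * Im w ^ 2 \<le> Im s ^ 2 * Im w ^ 2"
      by (simp add: power_mult_distrib mult.commute)
    then have "Re w ^ 2 \<le> Im s ^ 2" using Im_w by simp
    then show False using Re_sq less by linarith
  qed
  then show ?thesis unfolding s_def by simp
qed

lemma Ln_add_Ln_eq_ii_pi:
  assumes "a * b = -1" "0 \<le> Im a" "0 \<le> Im b"
  shows "Ln a + Ln b = \<i> * pi"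
proof -
  have nz: "a \<noteq> 0" "b \<noteq> 0" using assms(1) by auto
  have "exp (Ln a + Ln b) = exp (\<i> * pi)"
    using nz assms(1) by (simp add: exp_add exp_Euler)
  then obtain n :: int where n: "Ln a + Ln b = \<i> * pi + (of_int (2 * n) * pi) * \<i>"
    unfolding exp_eq by blast
  have "0 \<le> Im (Ln a)" "Im (Ln a) \<le> pi" "0 \<le> Im (Ln b)" "Im (Ln b) \<le> pi"
    using assms nz Im_Ln_pos_le by auto
  moreover have "Im (Ln a) + Im (Ln b) = pi + 2 * pi * n"
    using arg_cong[OF n, of Im] by simp
  ultimately have "\<bar>2 * pi * n\<bar> \<le> pi" by linarith
  then have "pi * (2 * \<bar>real_of_int n\<bar>) \<le> pi * 1" by (simp add: abs_mult)
  then have "2 * \<bar>real_of_int n\<bar> \<le> 1"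
    using pi_gt_zero by (rule mult_left_le_imp_le)
  then have "n = 0" by linarith
  then show ?thesis using n by simp
qed

lemma Arccos_minus: "Arccos (- w) = pi - Arccos w"
proof -
  define s where "s = csqrt (1 - w\<^sup>2)"
  have "(w + \<i> * s) * (- w + \<i> * s) = -1"
    using power2_csqrt[of "1 - w\<^sup>2"] unfolding s_def[symmetric]
    by (simp add: algebra_simps power2_eq_square)
  then have "Ln (w + \<i> * s) + Ln (- w + \<i> * s) = \<i> * pi"
    using Im_Arccos_body_nonneg[of w] Im_Arccos_body_nonneg[of "- w"]
    by (intro Ln_add_Ln_eq_ii_pi) (simp_all add: s_def)
  then have "Ln (- w + \<i> * s) = \<i> * pi - Ln (w + \<i> * s)"
    by (simp add: eq_diff_eq add.commute)
  moreover have "Arccos (- w) = - \<i> * Ln (- w + \<i> * s)" "Arccos w = - \<i> * Ln (w + \<i> * s)"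
    unfolding Arccos_def s_def by simp_all
  ultimately show ?thesis by (simp add: right_diff_distrib)
qed

lemma w_minus_one_minus: "w_minus (1 - t) = 1 - w_plus t"
proof -
  have "(1 - t)\<^sup>2 - (1 - t) + 1 = t\<^sup>2 - t + 1" by (simp add: power2_eq_square algebra_simps)
  then show ?thesis unfolding w_minus_def w_plus_def by (simp only:) (simp add: field_simps)
qed

lemma Q_minus_one_minus: "Q_minus (1 - t) = - Q_plus t"
  unfolding Q_minus_def Q_plus_def w_minus_one_minus Qpoly_def by (simp add: algebra_simps)

lemma u_coef_one_minus: "u_coef (1 - t) = u_coef t"
  unfolding u_coef_def by (simp add: power2_eq_square algebra_simps)

lemma v_coef_one_minus: "v_coef (- Q) (1 - t) = - v_coef Q t"
  unfolding v_coef_def by (simp add: divide_simps) (simp add: power3_eq_cube algebra_simps)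

lemma wroot_one_minus:
  "wroot 0 (- Q) (1 - t) = 1 - wroot 1 Q t"
  "wroot 1 (- Q) (1 - t) = 1 - wroot 0 Q t"
  "wroot 2 (- Q) (1 - t) = 1 - wroot 2 Q t"
proof -
  define \<alpha> where "\<alpha> = Arccos (3 * v_coef Q t / (2 * u_coef t) * csqrt (- 3 / u_coef t))"
  define S where "S = csqrt (- u_coef t / 3)"
  have reflected: "wroot k (- Q) (1 - t) = (2 - t) / 3 + 2 * S * cos ((pi - \<alpha>) / 3 + theta k)" for k
    unfolding wroot_def u_coef_one_minus v_coef_one_minus S_def \<alpha>_def
    by (simp add: Arccos_minus[symmetric] field_simps)
  have original: "wroot k Q t = (t + 1) / 3 + 2 * S * cos (\<alpha> / 3 + theta k)" for k
    unfolding wroot_def \<alpha>_def S_def by (simp add: field_simps)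
  have "(pi - \<alpha>) / 3 + theta 0 = pi - (\<alpha> / 3 + theta 1)"
       "(pi - \<alpha>) / 3 + theta 1 = pi - (\<alpha> / 3 + theta 0)"
       "(pi - \<alpha>) / 3 + theta 2 = - ((\<alpha> / 3 + theta 2) + pi)"
    by (simp_all add: theta_def field_simps)
  then have "cos ((pi - \<alpha>) / 3 + theta 0) = - cos (\<alpha> / 3 + theta 1)"
            "cos ((pi - \<alpha>) / 3 + theta 1) = - cos (\<alpha> / 3 + theta 0)"
            "cos ((pi - \<alpha>) / 3 + theta 2) = - cos (\<alpha> / 3 + theta 2)"
    by (simp_all only: cos_diff cos_minus cos_plus_pi) simp_all
  then show "wroot 0 (- Q) (1 - t) = 1 - wroot 1 Q t"
            "wroot 1 (- Q) (1 - t) = 1 - wroot 0 Q t"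
            "wroot 2 (- Q) (1 - t) = 1 - wroot 2 Q t"
    unfolding reflected original by (simp_all add: field_simps)
qed

lemma Psi_one_minus: "Psi (- Q) (1 - t) = - Phi Q t"
proof -
  have "(1 - wroot 1 Q t - (1 - wroot 0 Q t)) * (1 - wroot 1 Q t - (1 - wroot 2 Q t)) *
        (1 - wroot 0 Q t - (1 - wroot 2 Q t))
      = (wroot 0 Q t - wroot 1 Q t) * (wroot 0 Q t - wroot 2 Q t) * (wroot 1 Q t - wroot 2 Q t)"
    by (simp add: algebra_simps)
  then show ?thesis unfolding Psi_def Phi_def Let_def wroot_one_minus
    by (simp add: algebra_simps minus_divide_left)
qed

lemma psi_hat_one_minus: "psi_hat \<zeta> (1 - t) = - phi_hat \<zeta> t"
  using Psi_one_minus[of "Q_plus t * exp (- \<zeta>)" t]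
  unfolding psi_hat_def phi_hat_def Q_minus_one_minus by simp

theorem proposition3p8:
  shows "\<exists>\<epsilon>>0. \<forall>z::complex. cmod (z - 1/2) < \<epsilon> \<longrightarrow>
           (\<forall>\<zeta>::complex. psi_hat \<zeta> (1 - z) = - phi_hat \<zeta> z)"
  using psi_hat_one_minus by (intro exI[of _ 1]) simp

end
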